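(* Let $\mathbb{L}=(L;s_1^{\mathbb{L}},\dots,s_m^{\mathbb{L}},p_1^{\mathbb{L}},\dots,p_n^{\mathbb{L}})$ be the projective Fraïssé limit of $\mathcal{F}^{(n)}$ (whose underlying space $L$ is a Cantor space). Then each $s_i^{\mathbb{L}}$, $i\in[m]$, is the graph of a homeomorphism of $L$ which fixes all of $p_1^{\mathbb{L}},\dots,p_n^{\mathbb{L}}$.
   Context: Fix $m\in\mathbb{N}$, $n\ge0$; $\sigma^{(n)}=\{s_1,\dots,s_m,p_1,\dots,p_n\}$ with $s_i$ binary relation symbols and $p_j$ constants. A topological structure is a zero-dimensional compact second countable space with closed sets for the $s_i$ and points for the $p_j$; finite ones are discrete. An epimorphism is a continuous surjection $\phi$ with $\phi(s_i^{\mathbb{A}})=s_i^{\mathbb{B}}$ and $\phi(p_j^{\mathbb{A}})=p_j^{\mathbb{B}}$. A binary relation $s$ on $A$ is surjective if each $a$ has $b,c$ with $(a,b),(c,a)\in s$; $a$ is outgoing for $s$ if $|\{b:(b,a)\in s\}|=1$ and $|\{b:(a,b)\in s\}|\ge2$. $\mathcal{F}$: finite $\{s_1,\dots,s_m\}$-structures with all $s_i$ surjective such that (i) every point is outgoing for exactly one of $s_1,s_1^{-1},\dots,s_m,s_m^{-1}$, (ii) if $(a,b)\in s_i$ then $a$ is $s_i$-outgoing or $b$ is $s_i^{-1}$-outgoing. $\mathbb{A}^{(n)}$: universe $A\sqcup[n]$, $s_i^{\mathbb{A}^{(n)}}=s_i^{\mathbb{A}}\cup\{(j,j):j\in[n]\}$,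 $p_j^{\mathbb{A}^{(n)}}=j$; $\mathcal{F}^{(n)}=\{\mathbb{A}^{(n)}:\mathbb{A}\in\mathcal{F}\}$. The projective Fraïssé limit of $\mathcal{F}^{(n)}$ (exists, unique up to isomorphism) is the topological structure $\mathbb{L}$ satisfying: (L1) every member of $\mathcal{F}^{(n)}$ is an epimorphic image of $\mathbb{L}$; (L2) every continuous map from $L$ to a finite discrete set factors as $g\psi$ with $\psi$ an epimorphism of $\mathbb{L}$ onto a member of $\mathcal{F}^{(n)}$; (L3) for epimorphisms $\phi_1,\phi_2\colon\mathbb{L}\to\mathbb{A}\in\mathcal{F}^{(n)}$ there is an automorphism $\alpha$ of $\mathbb{L}$ with $\phi_1=\phi_2\alpha$. *)

theory Defs
  imports "HOL-Analysis.Analysis"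
begin

definition zero_dimensional :: "'a topology \<Rightarrow> bool" where
  "zero_dimensional T \<longleftrightarrow>
     (\<forall>U x. openin T U \<and> x \<in> U \<longrightarrow> (\<exists>V. openin T V \<and> closedin T V \<and> x \<in> V \<and> V \<subseteq> U))"

text \<open>The space is zero-dimensional, compact, second countable (and Hausdorff, as is
  implicit in the paper's notion of a zero-dimensional compact metrizable space).\<close>
definition top_structure ::
  "nat \<Rightarrow> nat \<Rightarrow> 'a topology \<Rightarrow> (nat \<Rightarrow> ('a \<times> 'a) set) \<Rightarrow> (nat \<Rightarrow> 'a) \<Rightarrow> bool" where
  "top_structure m n T s p \<longleftrightarrow>
     Hausdorff_space T \<and> zero_dimensional T \<and> compact_space T \<and> second_countable T \<and>
     (\<forall>i\<in>{1..m}. closedin (prod_topology T T) (s i)) \<and>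
     (\<forall>j\<in>{1..n}. p j \<in> topspace T)"

definition epimorphism ::
  "nat \<Rightarrow> nat \<Rightarrow> 'a topology \<Rightarrow> (nat \<Rightarrow> ('a \<times> 'a) set) \<Rightarrow> (nat \<Rightarrow> 'a)
   \<Rightarrow> 'b set \<Rightarrow> (nat \<Rightarrow> ('b \<times> 'b) set) \<Rightarrow> (nat \<Rightarrow> 'b) \<Rightarrow> ('a \<Rightarrow> 'b) \<Rightarrow> bool" where
  "epimorphism m n T s p B sB pB \<phi> \<longleftrightarrow>
     continuous_map T (discrete_topology B) \<phi> \<and> \<phi> ` topspace T = B \<and>
     (\<forall>i\<in>{1..m}. (\<lambda>(x, y). (\<phi> x, \<phi> y)) ` s i = sB i) \<and>
     (\<forall>j\<in>{1..n}. \<phi> (p j) = pB j)"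

definition automorphism ::
  "nat \<Rightarrow> nat \<Rightarrow> 'a topology \<Rightarrow> (nat \<Rightarrow> ('a \<times> 'a) set) \<Rightarrow> (nat \<Rightarrow> 'a) \<Rightarrow> ('a \<Rightarrow> 'a) \<Rightarrow> bool" where
  "automorphism m n T s p \<alpha> \<longleftrightarrow>
     homeomorphic_map T T \<alpha> \<and>
     (\<forall>i\<in>{1..m}. (\<lambda>(x, y). (\<alpha> x, \<alpha> y)) ` s i = s i) \<and>
     (\<forall>j\<in>{1..n}. \<alpha> (p j) = p j)"

definition surjective_rel :: "'a set \<Rightarrow> ('a \<times> 'a) set \<Rightarrow> bool" where
  "surjective_rel A r \<longleftrightarrow> (\<forall>a\<in>A. (\<exists>b. (a, b) \<in> r) \<and> (\<exists>c. (c, a) \<in> r))"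

definition outgoing :: "('a \<times> 'a) set \<Rightarrow> 'a \<Rightarrow> bool" where
  "outgoing r a \<longleftrightarrow> card {b. (b, a) \<in> r} = 1 \<and> card {b. (a, b) \<in> r} \<ge> 2"

text \<open>Membership in the class F (finite nonempty {s_1..s_m}-structures). The list
  s_1, s_1^-1, ..., s_m, s_m^-1 is indexed by pairs (i, b), b = True meaning s_i,
  b = False meaning its converse.\<close>
definition in_F :: "nat \<Rightarrow> 'a set \<Rightarrow> (nat \<Rightarrow> ('a \<times> 'a) set) \<Rightarrow> bool" where
  "in_F m A s \<longleftrightarrow>
     finite A \<and> A \<noteq> {} \<and>
     (\<forall>i\<in>{1..m}. s i \<subseteq> A \<times> A \<and> surjective_rel A (s i)) \<and>
     (\<forall>a\<in>A. card {(i, b). i \<in> {1..m} \<and> outgoing (if b then s i else (s i)\<inverse>) a} = 1) \<and>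
     (\<forall>i\<in>{1..m}. \<forall>a b. (a, b) \<in> s i \<longrightarrow> outgoing (s i) a \<or> outgoing ((s i)\<inverse>) b)"

definition ext_univ :: "nat \<Rightarrow> 'a set \<Rightarrow> ('a + nat) set" where
  "ext_univ n A = Inl ` A \<union> Inr ` {1..n}"

definition ext_rel :: "nat \<Rightarrow> (nat \<Rightarrow> ('a \<times> 'a) set) \<Rightarrow> nat \<Rightarrow> (('a + nat) \<times> ('a + nat)) set" where
  "ext_rel n s i = (\<lambda>(x, y). (Inl x, Inl y)) ` s i \<union> {(Inr j, Inr j) | j. j \<in> {1..n}}"

definition ext_const :: "nat \<Rightarrow> 'a + nat" where
  "ext_const j = Inr j"

text \<open>Members of F
  (hence of F^(n)) are represented up to isomorphism by structures on subsets of nat;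
  finite discrete sets in (L2) are represented by finite subsets of nat.\<close>
definition proj_fraisse_limit ::
  "nat \<Rightarrow> nat \<Rightarrow> 'a topology \<Rightarrow> (nat \<Rightarrow> ('a \<times> 'a) set) \<Rightarrow> (nat \<Rightarrow> 'a) \<Rightarrow> bool" where
  "proj_fraisse_limit m n T s p \<longleftrightarrow>
     top_structure m n T s p \<and>
     \<comment> \<open>(L1)\<close>
     (\<forall>(A :: nat set) sA. in_F m A sA \<longrightarrow>
        (\<exists>\<phi>. epimorphism m n T s p (ext_univ n A) (ext_rel n sA) ext_const \<phi>)) \<and>
     \<comment> \<open>(L2)\<close>
     (\<forall>(X :: nat set) f. finite X \<and> continuous_map T (discrete_topology X) f \<longrightarrow>
        (\<exists>(A :: nat set) sA \<psi> g. in_F m A sA \<and>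
            epimorphism m n T s p (ext_univ n A) (ext_rel n sA) ext_const \<psi> \<and>
            (\<forall>x\<in>topspace T. f x = g (\<psi> x)))) \<and>
     \<comment> \<open>(L3)\<close>
     (\<forall>(A :: nat set) sA \<phi>1 \<phi>2. in_F m A sA \<and>
        epimorphism m n T s p (ext_univ n A) (ext_rel n sA) ext_const \<phi>1 \<and>
        epimorphism m n T s p (ext_univ n A) (ext_rel n sA) ext_const \<phi>2 \<longrightarrow>
        (\<exists>\<alpha>. automorphism m n T s p \<alpha> \<and> (\<forall>x\<in>topspace T. \<phi>1 x = \<phi>2 (\<alpha> x))))"

end

theory Submission
  imports Defs
begin

text \<open>Each s_i is a closed subset of L \<times> L, and a closed relation on a compact space that is
  the graph of a bijection is the graph of a homeomorphism. So it suffices to show that s_i is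
  total, surjective, single-valued and injective, and that it relates p_j only to p_j.

  Clopen sets separate points from closed sets, so by (L2) a point outside a closed set is
  separated from it by an epimorphism onto a member of F^(n). Since every point of such a
  member has s_i-successors and s_i-predecessors, and the domain and range of s_i are closed,
  s_i is total and surjective. In A^(n) the point j is s_i-related only to itself, which
  forces p_j to be s_i-related only to itself.

  If y \<noteq> z are s_i-successors of x, separate them by an epimorphism \<psi> onto A^(n).
  There is a structure B in F projecting onto A such that all s_k-successors (and all
  s_k-predecessors) of a point of B lie over the same point of A. By (L1) there is an
  epimorphism onto B^(n), and by (L3) \<psi> is this epimorphism followed by the projection, up
  to an automorphism of L. Hence \<psi> y = \<psi> z, a contradiction; injectivity is symmetric.\<close>

section \<open>Successors, predecessors and outgoing points\<close>

abbreviation pair_image :: "('a \<Rightarrow> 'b) \<Rightarrow> ('a \<times> 'a) set \<Rightarrow> ('b \<times> 'b) set" where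
  "pair_image f r \<equiv> (\<lambda>(x, y). (f x, f y)) ` r"

definition succs :: "('a \<times> 'a) set \<Rightarrow> 'a \<Rightarrow> 'a set" where
  "succs r x = {y. (x, y) \<in> r}"

definition preds :: "('a \<times> 'a) set \<Rightarrow> 'a \<Rightarrow> 'a set" where
  "preds r x = {y. (y, x) \<in> r}"

lemma succs_converse [simp]: "succs (r\<inverse>) x = preds r x"
  and preds_converse [simp]: "preds (r\<inverse>) x = succs r x"
  by (auto simp: succs_def preds_def)

lemma outgoing_iff_card: "outgoing r a \<longleftrightarrow> card (preds r a) = 1 \<and> 2 \<le> card (succs r a)"
  by (simp add: outgoing_def succs_def preds_def)

lemma outgoing_iff_card_1:
  assumes "finite (succs r a)" "succs r a \<noteq> {}"
  shows "outgoing r a \<longleftrightarrow> card (preds r a) = 1 \<and> card (succs r a) \<noteq> 1"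
  using assms card_gt_0_iff[of "succs r a"] by (auto simp: outgoing_iff_card)

lemma outgoing_cong_card_1:
  assumes "finite (succs r a)" "succs r a \<noteq> {}" "finite (succs r' b)" "succs r' b \<noteq> {}"
    and "card (succs r a) = 1 \<longleftrightarrow> card (succs r' b) = 1"
    and "card (preds r a) = 1 \<longleftrightarrow> card (preds r' b) = 1"
  shows "outgoing r a \<longleftrightarrow> outgoing r' b"
  using assms by (simp add: outgoing_iff_card_1)

lemma card_ne_1I: "y \<in> S \<Longrightarrow> z \<in> S \<Longrightarrow> y \<noteq> z \<Longrightarrow> card S \<noteq> 1"
  by (auto simp: card_1_singleton_iff)

lemma card_1_eq: "card S = 1 \<Longrightarrow> x \<in> S \<Longrightarrow> y \<in> S \<Longrightarrow> x = y"
  by (auto simp: card_1_singleton_iff)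

lemma card_not_1_obtain_other:
  assumes "x \<in> S" "card S \<noteq> 1"
  obtains y where "y \<in> S" "y \<noteq> x"
proof -
  have "S \<noteq> {x}" using assms(2) by auto
  then show thesis using assms(1) that by blast
qed

lemma surjective_rel_Domain_Range:
  assumes sub: "r \<subseteq> A \<times> A" and surj: "surjective_rel A r"
  shows "Domain r = A" "Range r = A"
proof -
  have "x \<in> Domain r \<and> x \<in> Range r" if "x \<in> A" for x
    using surj that unfolding surjective_rel_def by (meson DomainI RangeI)
  then show "Domain r = A" "Range r = A" using sub by auto
qed

lemma single_valued_apsnd_imageI:
  assumes "\<And>x y z. (x, y) \<in> r \<Longrightarrow> (x, z) \<in> r \<Longrightarrow> \<pi> y = \<pi> z"
  shows "single_valued (apsnd \<pi> ` r)"
proof (rule single_valuedI)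
  fix a b c assume "(a, b) \<in> apsnd \<pi> ` r" "(a, c) \<in> apsnd \<pi> ` r"
  then obtain y z where "(a, y) \<in> r" "b = \<pi> y" "(a, z) \<in> r" "c = \<pi> z" by force
  then show "b = c" using assms by blast
qed

lemma single_valued_apsnd_imageD:
  "single_valued (apsnd \<pi> ` r) \<Longrightarrow> (x, y) \<in> r \<Longrightarrow> (x, z) \<in> r \<Longrightarrow> \<pi> y = \<pi> z"
  by (metis apsnd_conv image_eqI single_valuedD)

lemma single_valued_iff_The:
  assumes sv: "single_valued S"
  shows "(x, y) \<in> S \<longleftrightarrow> x \<in> Domain S \<and> (THE y. (x, y) \<in> S) = y"
proof -
  have the_eq: "(THE y. (x, y) \<in> S) = y" if xy: "(x, y) \<in> S" for y
  proof (rule the_equality)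
    show "z = y" if "(x, z) \<in> S" for z using single_valuedD[OF sv that xy] .
  qed (rule xy)
  show ?thesis
  proof
    assume "(x, y) \<in> S"
    then show "x \<in> Domain S \<and> (THE y. (x, y) \<in> S) = y" using the_eq by blast
  next
    assume "x \<in> Domain S \<and> (THE y. (x, y) \<in> S) = y"
    then obtain y' where "(x, y') \<in> S" "(THE y. (x, y) \<in> S) = y" by blast
    then show "(x, y) \<in> S" using the_eq by simp
  qed
qed

lemma pair_image_converse: "pair_image f (r\<inverse>) = (pair_image f r)\<inverse>"
  by auto

lemma Domain_pair_image: "Domain (pair_image f r) = f ` Domain r"
  by force

lemma Range_pair_image: "Range (pair_image f r) = f ` Range r"
  by force

lemma pair_image_comp: "pair_image (g \<circ> f) r = pair_image g (pair_image f r)"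
  by (simp add: image_image case_prod_beta)

lemma succs_pair_image:
  assumes f: "inj_on f A" and r: "r \<subseteq> A \<times> A" and a: "a \<in> A"
  shows "succs (pair_image f r) (f a) = f ` succs r a"
proof (intro equalityI subsetI)
  fix w assume "w \<in> succs (pair_image f r) (f a)"
  then obtain u v where uv: "(u, v) \<in> r" "f u = f a" "w = f v" by (auto simp: succs_def)
  then have "u = a" using inj_onD[OF f] r a by blast
  then show "w \<in> f ` succs r a" using uv by (auto simp: succs_def)
qed (force simp: succs_def)

lemma outgoing_pair_image:
  assumes f: "inj_on f A" and r: "r \<subseteq> A \<times> A" and a: "a \<in> A"
  shows "outgoing (pair_image f r) (f a) \<longleftrightarrow> outgoing r a"
proof -
  have "r\<inverse> \<subseteq> A \<times> A" using r by auto
  then have "preds (pair_image f r) (f a) = f ` preds r a"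
    using succs_pair_image[OF f _ a, of "r\<inverse>"] by (simp add: pair_image_converse)
  moreover have "inj_on f (succs r a)" "inj_on f (preds r a)"
    using f r by (auto simp: succs_def preds_def intro: inj_on_subset)
  ultimately show ?thesis
    using succs_pair_image[OF f r a] by (simp add: outgoing_iff_card card_image)
qed

lemma in_F_pullback:
  assumes F: "in_F m A sA" and B: "finite B" "B \<noteq> {}"
    and sub: "\<And>k. k \<in> {1..m} \<Longrightarrow> sB k \<subseteq> B \<times> B"
    and surj: "\<And>k. k \<in> {1..m} \<Longrightarrow> surjective_rel B (sB k)"
    and \<pi>: "\<pi> ` B \<subseteq> A"
    and edge: "\<And>k x y. k \<in> {1..m} \<Longrightarrow> (x, y) \<in> sB k \<Longrightarrow> (\<pi> x, \<pi> y) \<in> sA k"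
    and out: "\<And>k x. k \<in> {1..m} \<Longrightarrow> x \<in> B \<Longrightarrow> outgoing (sB k) x \<longleftrightarrow> outgoing (sA k) (\<pi> x)"
    and out_conv: "\<And>k x. k \<in> {1..m} \<Longrightarrow> x \<in> B \<Longrightarrow>
      outgoing ((sB k)\<inverse>) x \<longleftrightarrow> outgoing ((sA k)\<inverse>) (\<pi> x)"
  shows "in_F m B sB"
  unfolding in_F_def
proof (intro conjI ballI allI impI)
  fix x assume x: "x \<in> B"
  have "{(i, b). i \<in> {1..m} \<and> outgoing (if b then sB i else (sB i)\<inverse>) x} =
        {(i, b). i \<in> {1..m} \<and> outgoing (if b then sA i else (sA i)\<inverse>) (\<pi> x)}"
    using out[OF _ x] out_conv[OF _ x] by auto
  moreover have "\<pi> x \<in> A" using \<pi> x by blast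
  ultimately show "card {(i, b). i \<in> {1..m} \<and> outgoing (if b then sB i else (sB i)\<inverse>) x} = 1"
    using F by (simp add: in_F_def)
next
  fix k x y assume k: "k \<in> {1..m}" and xy: "(x, y) \<in> sB k"
  then have "outgoing (sA k) (\<pi> x) \<or> outgoing ((sA k)\<inverse>) (\<pi> y)"
    using F edge by (simp add: in_F_def)
  moreover have "x \<in> B" "y \<in> B" using sub[OF k] xy by auto
  ultimately show "outgoing (sB k) x \<or> outgoing ((sB k)\<inverse>) y"
    using out[OF k] out_conv[OF k] by simp
qed (use B sub surj in simp_all)

lemma in_F_inj_image:
  assumes F: "in_F m A sA" and f: "inj_on f A"
  shows "in_F m (f ` A) (\<lambda>k. pair_image f (sA k))"
proof -
  let ?g = "inv_into A f"
  have sub: "sA k \<subseteq> A \<times> A" "(sA k)\<inverse> \<subseteq> A \<times> A" if "k \<in> {1..m}" for k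
    using F that by (auto simp: in_F_def)
  have fin: "finite (f ` A)" "f ` A \<noteq> {}" using F by (auto simp: in_F_def)
  have sub': "pair_image f (sA k) \<subseteq> f ` A \<times> f ` A" if "k \<in> {1..m}" for k
    using sub[OF that] by auto
  have surj: "surjective_rel (f ` A) (pair_image f (sA k))" if "k \<in> {1..m}" for k
    using F that unfolding in_F_def surjective_rel_def by fast
  have g: "?g ` f ` A \<subseteq> A" using f by simp
  have edge: "(?g x, ?g y) \<in> sA k" if "k \<in> {1..m}" "(x, y) \<in> pair_image f (sA k)" for k x y
    using that sub[OF that(1)] by (force simp: inv_into_f_f[OF f])
  have out: "outgoing (pair_image f (sA k)) x \<longleftrightarrow> outgoing (sA k) (?g x)"
    and out_conv: "outgoing ((pair_image f (sA k))\<inverse>) x \<longleftrightarrow> outgoing ((sA k)\<inverse>) (?g x)"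
    if k: "k \<in> {1..m}" and x: "x \<in> f ` A" for k x
  proof -
    obtain a where a: "a \<in> A" "x = f a" using x by blast
    show "outgoing (pair_image f (sA k)) x \<longleftrightarrow> outgoing (sA k) (?g x)"
      using outgoing_pair_image[OF f sub(1)[OF k] a(1)]
      unfolding a(2) inv_into_f_f[OF f a(1)] .
    show "outgoing ((pair_image f (sA k))\<inverse>) x \<longleftrightarrow> outgoing ((sA k)\<inverse>) (?g x)"
      using outgoing_pair_image[OF f sub(2)[OF k] a(1)]
      unfolding a(2) inv_into_f_f[OF f a(1)] pair_image_converse .
  qed
  show ?thesis
    by (rule in_F_pullback[OF F fin sub' surj g edge out out_conv])
qed

section \<open>Refining a member of F\<close>

type_synonym 'a refined = "'a \<times> (nat \<times> 'a \<Rightarrow> 'a) \<times> (nat \<times> 'a \<Rightarrow> 'a)"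

locale choice_refinement =
  fixes m :: nat and A :: "'a set" and sA :: "nat \<Rightarrow> ('a \<times> 'a) set"
  assumes in_F: "in_F m A sA"
begin

lemma sA_subset: "k \<in> {1..m} \<Longrightarrow> sA k \<subseteq> A \<times> A"
  using in_F by (simp add: in_F_def)

lemma succs_sA: "k \<in> {1..m} \<Longrightarrow> a \<in> A \<Longrightarrow> finite (succs (sA k) a) \<and> succs (sA k) a \<noteq> {}"
  and preds_sA: "k \<in> {1..m} \<Longrightarrow> a \<in> A \<Longrightarrow> finite (preds (sA k) a) \<and> preds (sA k) a \<noteq> {}"
proof -
  assume k: "k \<in> {1..m}" and a: "a \<in> A"
  have "finite A" "surjective_rel A (sA k)" using in_F k by (simp_all add: in_F_def)
  moreover have "succs (sA k) a \<subseteq> A" "preds (sA k) a \<subseteq> A"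
    using sA_subset[OF k] by (auto simp: succs_def preds_def)
  ultimately show "finite (succs (sA k) a) \<and> succs (sA k) a \<noteq> {}"
    and "finite (preds (sA k) a) \<and> preds (sA k) a \<noteq> {}"
    using a by (auto simp: surjective_rel_def succs_def preds_def intro: finite_subset)
qed

text \<open>A point of the refinement is a point a of A together with, for every k and every
  point x of A, a chosen s_k-successor and a chosen s_k-predecessor of x. An s_k-edge
  leaves (a, \<sigma>, \<tau>) only towards the chosen successor \<sigma> (k, a), so all s_k-successors
  of a point lie over the same point of A. The remaining clauses make a point of
  out-degree (in-degree) one in A have out-degree (in-degree) one in the refinement.\<close>

definition succ_choices :: "(nat \<times> 'a \<Rightarrow> 'a) set" where
  "succ_choices = PiE ({1..m} \<times> A) (\<lambda>(k, x). succs (sA k) x)"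

definition pred_choices :: "(nat \<times> 'a \<Rightarrow> 'a) set" where
  "pred_choices = PiE ({1..m} \<times> A) (\<lambda>(k, x). preds (sA k) x)"

definition ref_univ :: "'a refined set" where
  "ref_univ = A \<times> succ_choices \<times> pred_choices"

definition ref_rel :: "nat \<Rightarrow> ('a refined \<times> 'a refined) set" where
  "ref_rel k = {((a, \<sigma>, \<tau>), (b, \<sigma>', \<tau>')).
     (a, \<sigma>, \<tau>) \<in> ref_univ \<and> (b, \<sigma>', \<tau>') \<in> ref_univ \<and> (a, b) \<in> sA k \<and>
     \<sigma> (k, a) = b \<and> \<tau>' (k, b) = a \<and>
     (card (preds (sA k) b) = 1 \<longrightarrow> \<sigma> = \<sigma>'((k, a) := b) \<and> \<tau> = \<tau>') \<and>
     (card (succs (sA k) a) = 1 \<longrightarrow> \<sigma>' = \<sigma> \<and> \<tau>' = \<tau>((k, b) := a))}"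

lemma succ_choice: "\<sigma> \<in> succ_choices \<Longrightarrow> k \<in> {1..m} \<Longrightarrow> a \<in> A \<Longrightarrow> \<sigma> (k, a) \<in> succs (sA k) a"
  unfolding succ_choices_def by (drule PiE_mem[where x = "(k, a)"]) auto

lemma pred_choice: "\<tau> \<in> pred_choices \<Longrightarrow> k \<in> {1..m} \<Longrightarrow> a \<in> A \<Longrightarrow> \<tau> (k, a) \<in> preds (sA k) a"
  unfolding pred_choices_def by (drule PiE_mem[where x = "(k, a)"]) auto

lemma succ_choices_update:
  assumes "\<sigma> \<in> succ_choices" "k \<in> {1..m}" "a \<in> A" "b \<in> succs (sA k) a"
  shows "\<sigma>((k, a) := b) \<in> succ_choices"
  using PiE_fun_upd[of b "\<lambda>(k, x). succs (sA k) x" "(k, a)" \<sigma> "{1..m} \<times> A"] assms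
  by (simp add: succ_choices_def insert_absorb)

lemma pred_choices_update:
  assumes "\<tau> \<in> pred_choices" "k \<in> {1..m}" "b \<in> A" "a \<in> preds (sA k) b"
  shows "\<tau>((k, b) := a) \<in> pred_choices"
  using PiE_fun_upd[of a "\<lambda>(k, x). preds (sA k) x" "(k, b)" \<tau> "{1..m} \<times> A"] assms
  by (simp add: pred_choices_def insert_absorb)

lemma choices_nonempty: "succ_choices \<noteq> {}" "pred_choices \<noteq> {}"
  unfolding succ_choices_def pred_choices_def PiE_eq_empty_iff
  using succs_sA preds_sA by auto

lemma finite_ref_univ: "finite ref_univ"
proof -
  have "finite A" using in_F by (simp add: in_F_def)
  then have "finite succ_choices" "finite pred_choices"
    unfolding succ_choices_def pred_choices_def
    using succs_sA preds_sA by (auto intro!: finite_PiE)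
  then show ?thesis using \<open>finite A\<close> by (simp add: ref_univ_def)
qed

lemma ref_rel_subset: "ref_rel k \<subseteq> ref_univ \<times> ref_univ"
  unfolding ref_rel_def by auto

lemma ref_rel_edge:
  "((a, \<sigma>, \<tau>), (b, \<sigma>', \<tau>')) \<in> ref_rel k \<Longrightarrow> (a, b) \<in> sA k \<and> \<sigma> (k, a) = b \<and> \<tau>' (k, b) = a"
  unfolding ref_rel_def by simp

lemma ref_rel_canonical_succ:
  assumes k: "k \<in> {1..m}" and x: "(a, \<sigma>, \<tau>) \<in> ref_univ"
  defines "b \<equiv> \<sigma> (k, a)"
  shows "((a, \<sigma>, \<tau>), (b, \<sigma>, \<tau>((k, b) := a))) \<in> ref_rel k"
    and "b' \<in> succs (sA k) a \<Longrightarrow> card (succs (sA k) a) \<noteq> 1 \<Longrightarrow>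
      ((a, \<sigma>, \<tau>), (b, \<sigma>((k, a) := b'), \<tau>((k, b) := a))) \<in> ref_rel k"
proof -
  have a: "a \<in> A" and \<sigma>: "\<sigma> \<in> succ_choices" and \<tau>: "\<tau> \<in> pred_choices"
    using x by (auto simp: ref_univ_def)
  have b: "b \<in> succs (sA k) a" using succ_choice[OF \<sigma> k a] by (simp add: b_def)
  then have ab: "(a, b) \<in> sA k" and bA: "b \<in> A" and ap: "a \<in> preds (sA k) b"
    using sA_subset[OF k] by (auto simp: succs_def preds_def)
  have \<tau>': "\<tau>((k, b) := a) \<in> pred_choices" by (rule pred_choices_update[OF \<tau> k bA ap])
  have "\<tau> (k, b) = a" if "card (preds (sA k) b) = 1"
    using card_1_eq[OF that pred_choice[OF \<tau> k bA] ap] .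
  then show "((a, \<sigma>, \<tau>), (b, \<sigma>, \<tau>((k, b) := a))) \<in> ref_rel k"
    using x a \<sigma> bA \<tau>' ab by (auto simp: ref_rel_def ref_univ_def b_def)
  assume b': "b' \<in> succs (sA k) a" and "card (succs (sA k) a) \<noteq> 1"
  moreover have "\<sigma>((k, a) := b') \<in> succ_choices" by (rule succ_choices_update[OF \<sigma> k a b'])
  ultimately show "((a, \<sigma>, \<tau>), (b, \<sigma>((k, a) := b'), \<tau>((k, b) := a))) \<in> ref_rel k"
    using x a bA \<tau>' ab \<open>card (preds (sA k) b) = 1 \<Longrightarrow> \<tau> (k, b) = a\<close>
    by (auto simp: ref_rel_def ref_univ_def b_def)
qed

lemma ref_rel_canonical_pred:
  assumes k: "k \<in> {1..m}" and y: "(b, \<sigma>', \<tau>') \<in> ref_univ"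
  defines "a \<equiv> \<tau>' (k, b)"
  shows "((a, \<sigma>'((k, a) := b), \<tau>'), (b, \<sigma>', \<tau>')) \<in> ref_rel k"
    and "a' \<in> preds (sA k) b \<Longrightarrow> card (preds (sA k) b) \<noteq> 1 \<Longrightarrow>
      ((a, \<sigma>'((k, a) := b), \<tau>'((k, b) := a')), (b, \<sigma>', \<tau>')) \<in> ref_rel k"
proof -
  have b: "b \<in> A" and \<sigma>': "\<sigma>' \<in> succ_choices" and \<tau>': "\<tau>' \<in> pred_choices"
    using y by (auto simp: ref_univ_def)
  have a: "a \<in> preds (sA k) b" using pred_choice[OF \<tau>' k b] by (simp add: a_def)
  then have ab: "(a, b) \<in> sA k" and aA: "a \<in> A" and bs: "b \<in> succs (sA k) a"
    using sA_subset[OF k] by (auto simp: succs_def preds_def)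
  have \<sigma>: "\<sigma>'((k, a) := b) \<in> succ_choices" by (rule succ_choices_update[OF \<sigma>' k aA bs])
  have "\<sigma>' (k, a) = b" if "card (succs (sA k) a) = 1"
    using card_1_eq[OF that succ_choice[OF \<sigma>' k aA] bs] .
  then show "((a, \<sigma>'((k, a) := b), \<tau>'), (b, \<sigma>', \<tau>')) \<in> ref_rel k"
    using y aA \<sigma> \<tau>' ab by (auto simp: ref_rel_def ref_univ_def a_def)
  assume a': "a' \<in> preds (sA k) b" and "card (preds (sA k) b) \<noteq> 1"
  moreover have "\<tau>'((k, b) := a') \<in> pred_choices" by (rule pred_choices_update[OF \<tau>' k b a'])
  ultimately show "((a, \<sigma>'((k, a) := b), \<tau>'((k, b) := a')), (b, \<sigma>', \<tau>')) \<in> ref_rel k"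
    using y aA \<sigma> ab \<open>card (succs (sA k) a) = 1 \<Longrightarrow> \<sigma>' (k, a) = b\<close>
    by (auto simp: ref_rel_def ref_univ_def a_def)
qed

lemma ref_rel_succ_unique:
  assumes "card (succs (sA k) a) = 1" "((a, \<sigma>, \<tau>), y) \<in> ref_rel k"
  shows "y = (\<sigma> (k, a), \<sigma>, \<tau>((k, \<sigma> (k, a)) := a))"
  using assms by (cases y) (auto simp: ref_rel_def)

lemma ref_rel_pred_unique:
  assumes "card (preds (sA k) b) = 1" "(x, (b, \<sigma>', \<tau>')) \<in> ref_rel k"
  shows "x = (\<tau>' (k, b), \<sigma>'((k, \<tau>' (k, b)) := b), \<tau>')"
  using assms by (cases x) (auto simp: ref_rel_def)

lemma card_succs_ref_rel:
  assumes k: "k \<in> {1..m}" and x: "(a, \<sigma>, \<tau>) \<in> ref_univ"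
  shows "card (succs (ref_rel k) (a, \<sigma>, \<tau>)) = 1 \<longleftrightarrow> card (succs (sA k) a) = 1"
proof (cases "card (succs (sA k) a) = 1")
  case True
  have "succs (ref_rel k) (a, \<sigma>, \<tau>) = {(\<sigma> (k, a), \<sigma>, \<tau>((k, \<sigma> (k, a)) := a))}"
  proof (intro equalityI subsetI)
    fix y assume "y \<in> succs (ref_rel k) (a, \<sigma>, \<tau>)"
    with ref_rel_succ_unique[OF True] show "y \<in> {(\<sigma> (k, a), \<sigma>, \<tau>((k, \<sigma> (k, a)) := a))}"
      by (simp add: succs_def)
  qed (use ref_rel_canonical_succ(1)[OF k x] in \<open>simp add: succs_def\<close>)
  then show ?thesis using True by simp
next
  case False
  have a: "a \<in> A" and \<sigma>: "\<sigma> \<in> succ_choices" using x by (auto simp: ref_univ_def)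
  obtain b' where b': "b' \<in> succs (sA k) a" "b' \<noteq> \<sigma> (k, a)"
    using card_not_1_obtain_other[OF succ_choice[OF \<sigma> k a] False] by blast
  have "\<sigma> \<noteq> \<sigma>((k, a) := b')" using b'(2) by (metis fun_upd_same)
  then have "card (succs (ref_rel k) (a, \<sigma>, \<tau>)) \<noteq> 1"
    using ref_rel_canonical_succ[OF k x] b'(1) False
    by (intro card_ne_1I[of "(\<sigma> (k, a), \<sigma>, \<tau>((k, \<sigma> (k, a)) := a))" _
          "(\<sigma> (k, a), \<sigma>((k, a) := b'), \<tau>((k, \<sigma> (k, a)) := a))"]) (simp_all add: succs_def)
  then show ?thesis using False by simp
qed

lemma card_preds_ref_rel:
  assumes k: "k \<in> {1..m}" and y: "(b, \<sigma>', \<tau>') \<in> ref_univ"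
  shows "card (preds (ref_rel k) (b, \<sigma>', \<tau>')) = 1 \<longleftrightarrow> card (preds (sA k) b) = 1"
proof (cases "card (preds (sA k) b) = 1")
  case True
  have "preds (ref_rel k) (b, \<sigma>', \<tau>') = {(\<tau>' (k, b), \<sigma>'((k, \<tau>' (k, b)) := b), \<tau>')}"
  proof (intro equalityI subsetI)
    fix x assume "x \<in> preds (ref_rel k) (b, \<sigma>', \<tau>')"
    with ref_rel_pred_unique[OF True] show "x \<in> {(\<tau>' (k, b), \<sigma>'((k, \<tau>' (k, b)) := b), \<tau>')}"
      by (simp add: preds_def)
  qed (use ref_rel_canonical_pred(1)[OF k y] in \<open>simp add: preds_def\<close>)
  then show ?thesis using True by simp
next
  case False
  have b: "b \<in> A" and \<tau>': "\<tau>' \<in> pred_choices" using y by (auto simp: ref_univ_def)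
  obtain a' where a': "a' \<in> preds (sA k) b" "a' \<noteq> \<tau>' (k, b)"
    using card_not_1_obtain_other[OF pred_choice[OF \<tau>' k b] False] by blast
  have "\<tau>' \<noteq> \<tau>'((k, b) := a')" using a'(2) by (metis fun_upd_same)
  then have "card (preds (ref_rel k) (b, \<sigma>', \<tau>')) \<noteq> 1"
    using ref_rel_canonical_pred[OF k y] a'(1) False
    by (intro card_ne_1I[of "(\<tau>' (k, b), \<sigma>'((k, \<tau>' (k, b)) := b), \<tau>')" _
          "(\<tau>' (k, b), \<sigma>'((k, \<tau>' (k, b)) := b), \<tau>'((k, b) := a'))"]) (simp_all add: preds_def)
  then show ?thesis using False by simp
qed

lemma in_F_ref: "in_F m ref_univ ref_rel"
proof (rule in_F_pullback[OF in_F, where \<pi> = fst])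
  have fin: "finite (succs (ref_rel k) x)" "finite (preds (ref_rel k) x)" for k x
    using finite_ref_univ ref_rel_subset[of k]
    by (auto simp: succs_def preds_def intro: finite_subset[where B = ref_univ])
  have ne: "succs (ref_rel k) x \<noteq> {}" "preds (ref_rel k) x \<noteq> {}"
    if "k \<in> {1..m}" "x \<in> ref_univ" for k x
    using that ref_rel_canonical_succ(1) ref_rel_canonical_pred(1)
    by (cases x; fastforce simp: succs_def preds_def)+
  show "finite ref_univ" by (rule finite_ref_univ)
  show "ref_univ \<noteq> {}" using in_F choices_nonempty by (auto simp: in_F_def ref_univ_def)
  show "ref_rel k \<subseteq> ref_univ \<times> ref_univ" for k by (rule ref_rel_subset)
  show "surjective_rel ref_univ (ref_rel k)" if "k \<in> {1..m}" for k
    using ne[OF that] by (auto simp: surjective_rel_def succs_def preds_def)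
  show "fst ` ref_univ \<subseteq> A" by (auto simp: ref_univ_def)
  show "(fst x, fst y) \<in> sA k" if "(x, y) \<in> ref_rel k" for k x y
    using that ref_rel_edge by (cases x, cases y) auto
  show "outgoing (ref_rel k) x \<longleftrightarrow> outgoing (sA k) (fst x)"
    and "outgoing ((ref_rel k)\<inverse>) x \<longleftrightarrow> outgoing ((sA k)\<inverse>) (fst x)"
    if k: "k \<in> {1..m}" and x: "x \<in> ref_univ" for k x
  proof -
    obtain a \<sigma> \<tau> where x': "x = (a, \<sigma>, \<tau>)" by (cases x)
    have xa: "(a, \<sigma>, \<tau>) \<in> ref_univ" and a: "a \<in> A" using x x' by (auto simp: ref_univ_def)
    show "outgoing (ref_rel k) x \<longleftrightarrow> outgoing (sA k) (fst x)"
      unfolding x' fst_conv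
      using fin ne[OF k xa] succs_sA[OF k a] card_succs_ref_rel[OF k xa] card_preds_ref_rel[OF k xa]
      by (intro outgoing_cong_card_1) auto
    show "outgoing ((ref_rel k)\<inverse>) x \<longleftrightarrow> outgoing ((sA k)\<inverse>) (fst x)"
      unfolding x' fst_conv
      using fin ne[OF k xa] preds_sA[OF k a] card_succs_ref_rel[OF k xa] card_preds_ref_rel[OF k xa]
      by (intro outgoing_cong_card_1) auto
  qed
qed

lemma fst_ref_univ: "fst ` ref_univ = A"
  using choices_nonempty by (auto simp: ref_univ_def)

lemma pair_image_fst_ref_rel:
  assumes k: "k \<in> {1..m}"
  shows "pair_image fst (ref_rel k) = sA k"
proof (intro equalityI subsetI)
  fix e assume "e \<in> pair_image fst (ref_rel k)"
  then show "e \<in> sA k" using ref_rel_edge by auto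
next
  fix e assume e: "e \<in> sA k"
  then obtain a b where ab: "e = (a, b)" "a \<in> A" "b \<in> succs (sA k) a"
    using sA_subset[OF k] by (cases e) (auto simp: succs_def)
  obtain \<sigma> \<tau> where \<sigma>: "\<sigma> \<in> succ_choices" and \<tau>: "\<tau> \<in> pred_choices"
    using choices_nonempty by blast
  have "(a, \<sigma>((k, a) := b), \<tau>) \<in> ref_univ"
    using succ_choices_update[OF \<sigma> k ab(2,3)] \<tau> ab(2) by (simp add: ref_univ_def)
  from ref_rel_canonical_succ(1)[OF k this] show "e \<in> pair_image fst (ref_rel k)"
    using ab(1) by force
qed

lemma single_valued_ref_rel: "single_valued (apsnd fst ` ref_rel k)"
  by (rule single_valued_apsnd_imageI) (auto simp: ref_rel_def)

lemma single_valued_ref_rel_converse: "single_valued (apsnd fst ` (ref_rel k)\<inverse>)"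
  by (rule single_valued_apsnd_imageI) (auto simp: ref_rel_def)

end

lemma in_F_refinement:
  assumes "in_F m A sA"
  obtains B :: "'a refined set" and sB where "in_F m B sB" "fst ` B = A"
    "\<And>k. k \<in> {1..m} \<Longrightarrow> pair_image fst (sB k) = sA k"
    "\<And>k. single_valued (apsnd fst ` sB k)" "\<And>k. single_valued (apsnd fst ` (sB k)\<inverse>)"
proof -
  interpret choice_refinement m A sA by (rule choice_refinement.intro) (rule assms)
  show thesis
    by (rule that[OF in_F_ref fst_ref_univ pair_image_fst_ref_rel
          single_valued_ref_rel single_valued_ref_rel_converse])
qed

section \<open>Epimorphisms onto expanded structures\<close>

lemma ext_univ_map_sum: "map_sum \<pi> id ` ext_univ n B = ext_univ n (\<pi> ` B)"
  unfolding ext_univ_def by (auto simp: image_Un image_image)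

lemma ext_rel_map_sum:
  "pair_image (map_sum \<pi> id) (ext_rel n sB k) = ext_rel n (\<lambda>k. pair_image \<pi> (sB k)) k"
proof -
  have l: "pair_image (map_sum \<pi> id) (pair_image Inl (sB k)) = pair_image Inl (pair_image \<pi> (sB k))"
    by (simp add: image_image case_prod_beta)
  have r: "pair_image (map_sum \<pi> id) {(Inr j, Inr j) | j. j \<in> {1..n}} = {(Inr j, Inr j) | j. j \<in> {1..n}}"
    by force
  show ?thesis unfolding ext_rel_def image_Un l r ..
qed

lemma ext_rel_converse: "(ext_rel n sB k)\<inverse> = ext_rel n (\<lambda>k. (sB k)\<inverse>) k"
  unfolding ext_rel_def by auto

lemma ext_rel_Inl: "(Inl u, w) \<in> ext_rel n sB k \<longleftrightarrow> (\<exists>v. w = Inl v \<and> (u, v) \<in> sB k)"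
  unfolding ext_rel_def by force

lemma ext_rel_Inr: "(Inr j, w) \<in> ext_rel n sB k \<Longrightarrow> w = Inr j"
  unfolding ext_rel_def by force

lemma single_valued_ext_rel:
  assumes sv: "single_valued (apsnd \<pi> ` sB k)"
  shows "single_valued (apsnd (map_sum \<pi> id) ` ext_rel n sB k)"
proof (rule single_valued_apsnd_imageI)
  fix z w w' assume e: "(z, w) \<in> ext_rel n sB k" "(z, w') \<in> ext_rel n sB k"
  show "map_sum \<pi> id w = map_sum \<pi> id w'"
  proof (cases z)
    case (Inl u)
    from e(1) obtain v where v: "w = Inl v" "(u, v) \<in> sB k"
      unfolding Inl ext_rel_Inl by blast
    from e(2) obtain v' where v': "w' = Inl v'" "(u, v') \<in> sB k"
      unfolding Inl ext_rel_Inl by blast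
    show ?thesis using single_valued_apsnd_imageD[OF sv v(2) v'(2)] v(1) v'(1) by simp
  next
    case (Inr j)
    from e have "w = Inr j" "w' = Inr j" unfolding Inr by (blast dest: ext_rel_Inr)+
    then show ?thesis by simp
  qed
qed

lemma surjective_ext_rel:
  assumes "in_F m A sA" "k \<in> {1..m}"
  shows "surjective_rel (ext_univ n A) (ext_rel n sA k)"
  unfolding surjective_rel_def
proof
  fix z assume "z \<in> ext_univ n A"
  then consider (Inl) a where "a \<in> A" "z = Inl a" | (Inr) j where "j \<in> {1..n}" "z = Inr j"
    unfolding ext_univ_def by blast
  then show "(\<exists>w. (z, w) \<in> ext_rel n sA k) \<and> (\<exists>w. (w, z) \<in> ext_rel n sA k)"
  proof cases
    case Inl
    then obtain b c where "(a, b) \<in> sA k" "(c, a) \<in> sA k"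
      using assms unfolding in_F_def surjective_rel_def by blast
    then show ?thesis using Inl(2) unfolding ext_rel_def by force
  next
    case Inr
    then show ?thesis unfolding ext_rel_def by blast
  qed
qed

lemma Domain_Range_ext_rel:
  assumes F: "in_F m A sA" and k: "k \<in> {1..m}"
  shows "Domain (ext_rel n sA k) = ext_univ n A" "Range (ext_rel n sA k) = ext_univ n A"
proof -
  have "sA k \<subseteq> A \<times> A" using F k by (simp add: in_F_def)
  then have "ext_rel n sA k \<subseteq> ext_univ n A \<times> ext_univ n A"
    unfolding ext_rel_def ext_univ_def by auto
  then show "Domain (ext_rel n sA k) = ext_univ n A" "Range (ext_rel n sA k) = ext_univ n A"
    by (rule surjective_rel_Domain_Range[OF _ surjective_ext_rel[OF F k]])+
qed

lemma epimorphism_pair_image: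
  "epimorphism m n T s p U R pc \<phi> \<Longrightarrow> i \<in> {1..m} \<Longrightarrow> pair_image \<phi> (s i) = R i"
  unfolding epimorphism_def by blast

lemma epimorphism_edge:
  "epimorphism m n T s p U R pc \<phi> \<Longrightarrow> i \<in> {1..m} \<Longrightarrow> (x, y) \<in> s i \<Longrightarrow> (\<phi> x, \<phi> y) \<in> R i"
  by (drule epimorphism_pair_image) force+

lemma epimorphism_in: "epimorphism m n T s p U R pc \<phi> \<Longrightarrow> x \<in> topspace T \<Longrightarrow> \<phi> x \<in> U"
  unfolding epimorphism_def by blast

lemma epimorphism_image_Domain:
  assumes "in_F m A sA" "epimorphism m n T s p (ext_univ n A) (ext_rel n sA) ext_const \<psi>" "i \<in> {1..m}"
  shows "\<psi> ` Domain (s i) = ext_univ n A"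
  unfolding Domain_pair_image[symmetric] epimorphism_pair_image[OF assms(2,3)]
  by (rule Domain_Range_ext_rel(1)[OF assms(1,3)])

lemma epimorphism_image_Range:
  assumes "in_F m A sA" "epimorphism m n T s p (ext_univ n A) (ext_rel n sA) ext_const \<psi>" "i \<in> {1..m}"
  shows "\<psi> ` Range (s i) = ext_univ n A"
  unfolding Range_pair_image[symmetric] epimorphism_pair_image[OF assms(2,3)]
  by (rule Domain_Range_ext_rel(2)[OF assms(1,3)])

lemma epimorphism_compose_map_sum:
  assumes \<theta>: "epimorphism m n T s p (ext_univ n B) (ext_rel n sB) ext_const \<theta>"
    and univ: "\<pi> ` B = A" and rel: "\<And>k. k \<in> {1..m} \<Longrightarrow> pair_image \<pi> (sB k) = sA k"
  shows "epimorphism m n T s p (ext_univ n A) (ext_rel n sA) ext_const (map_sum \<pi> id \<circ> \<theta>)"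
  unfolding epimorphism_def
proof (intro conjI ballI)
  have "continuous_map T (discrete_topology (ext_univ n B)) \<theta>"
    using \<theta> by (simp add: epimorphism_def)
  moreover have "continuous_map (discrete_topology (ext_univ n B)) (discrete_topology (ext_univ n A)) (map_sum \<pi> id)"
    using ext_univ_map_sum[of \<pi> n B] univ by auto
  ultimately show "continuous_map T (discrete_topology (ext_univ n A)) (map_sum \<pi> id \<circ> \<theta>)"
    by (rule continuous_map_compose)
  have "\<theta> ` topspace T = ext_univ n B" using \<theta> by (simp add: epimorphism_def)
  then show "(map_sum \<pi> id \<circ> \<theta>) ` topspace T = ext_univ n A"
    unfolding image_comp[symmetric] using ext_univ_map_sum[of \<pi> n B] univ by simp
next
  fix k assume k: "k \<in> {1..m}"
  have "pair_image (map_sum \<pi> id \<circ> \<theta>) (s k) = pair_image (map_sum \<pi> id) (ext_rel n sB k)"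
    unfolding pair_image_comp epimorphism_pair_image[OF \<theta> k] ..
  also have "\<dots> = ext_rel n sA k"
    unfolding ext_rel_map_sum by (simp add: ext_rel_def rel[OF k])
  finally show "pair_image (map_sum \<pi> id \<circ> \<theta>) (s k) = ext_rel n sA k" .
next
  fix j assume "j \<in> {1..n}"
  then show "(map_sum \<pi> id \<circ> \<theta>) (p j) = ext_const j"
    using \<theta> by (simp add: epimorphism_def ext_const_def)
qed

lemma automorphism_edge:
  "automorphism m n T s p \<alpha> \<Longrightarrow> i \<in> {1..m} \<Longrightarrow> (x, y) \<in> s i \<Longrightarrow> (\<alpha> x, \<alpha> y) \<in> s i"
  unfolding automorphism_def by force

lemma continuous_map_indicator_clopen:
  assumes "openin T V" "closedin T V"
  shows "continuous_map T (discrete_topology {0, 1}) (\<lambda>y. if y \<in> V then 1 else 0 :: nat)"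
  unfolding continuous_map_def
proof (intro conjI allI impI)
  show "(\<lambda>y. if y \<in> V then 1 else 0 :: nat) \<in> topspace T \<rightarrow> topspace (discrete_topology {0, 1})"
    by simp
  fix U :: "nat set"
  have "{y \<in> topspace T. (if y \<in> V then 1 else 0) \<in> U} =
      (if 1 \<in> U then V else {}) \<union> (if 0 \<in> U then topspace T - V else {})"
    using openin_subset[OF assms(1)] by auto
  moreover have "openin T (topspace T - V)" using assms(2) by (simp add: openin_diff)
  ultimately show "openin T {y \<in> topspace T. (if y \<in> V then 1 else 0) \<in> U}"
    using assms(1) by (simp add: openin_Un)
qed

lemma closedin_converse:
  assumes "closedin (prod_topology X Y) S"
  shows "closedin (prod_topology Y X) (S\<inverse>)"
proof -
  have "closed_map (prod_topology X Y) (prod_topology Y X) (\<lambda>(x, y). (y, x))"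
    by (rule homeomorphic_imp_closed_map[OF homeomorphic_map_swap])
  moreover have "S\<inverse> = (\<lambda>(x, y). (y, x)) ` S" by force
  ultimately show ?thesis using assms unfolding closed_map_def by metis
qed

lemma continuous_map_closed_graph:
  assumes Y: "compact_space Y" and S: "closedin (prod_topology X Y) S"
    and graph: "\<And>x y. (x, y) \<in> S \<longleftrightarrow> x \<in> topspace X \<and> f x = y"
  shows "continuous_map X Y f"
  unfolding continuous_map_closedin
proof (intro conjI allI impI)
  have sub: "S \<subseteq> topspace X \<times> topspace Y" using closedin_subset[OF S] by simp
  show "f \<in> topspace X \<rightarrow> topspace Y"
  proof
    fix x assume "x \<in> topspace X"
    then have "(x, f x) \<in> S" using graph by simp
    then show "f x \<in> topspace Y" using sub by blast
  qed
  fix K assume "closedin Y K"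
  then have "closedin (prod_topology X Y) (S \<inter> topspace X \<times> K)"
    using S by (intro closedin_Int) (simp_all add: closedin_prod_Times_iff)
  then have closed: "closedin X (fst ` (S \<inter> topspace X \<times> K))"
    using Abstract_Topological_Spaces.closed_map_fst[OF Y] unfolding closed_map_def by blast
  have "fst ` (S \<inter> topspace X \<times> K) = {x \<in> topspace X. f x \<in> K}"
  proof (intro equalityI subsetI)
    fix x assume "x \<in> fst ` (S \<inter> topspace X \<times> K)"
    then obtain y where "(x, y) \<in> S" "y \<in> K" by auto
    then show "x \<in> {x \<in> topspace X. f x \<in> K}" using graph by simp
  next
    fix x assume "x \<in> {x \<in> topspace X. f x \<in> K}"
    then have "(x, f x) \<in> S \<inter> topspace X \<times> K" using graph by simp
    then show "x \<in> fst ` (S \<inter> topspace X \<times> K)" by (rule rev_image_eqI) simp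
  qed
  with closed show "closedin X {x \<in> topspace X. f x \<in> K}" by simp
qed

lemma homeomorphic_map_closed_graph:
  assumes X: "compact_space X" and Y: "compact_space Y"
    and S: "closedin (prod_topology X Y) S"
    and sv: "single_valued S" "single_valued (S\<inverse>)"
    and dom: "Domain S = topspace X" and ran: "Range S = topspace Y"
  obtains h where "homeomorphic_map X Y h" "S = {(x, h x) | x. x \<in> topspace X}"
proof -
  define h where "h x = (THE y. (x, y) \<in> S)" for x
  define g where "g y = (THE x. (y, x) \<in> S\<inverse>)" for y
  have h_graph: "(x, y) \<in> S \<longleftrightarrow> x \<in> topspace X \<and> h x = y" for x y
    unfolding h_def dom[symmetric] by (rule single_valued_iff_The[OF sv(1)])
  have g_graph: "(y, x) \<in> S\<inverse> \<longleftrightarrow> y \<in> topspace Y \<and> g y = x" for x y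
    unfolding g_def ran[symmetric] Domain_converse[symmetric] by (rule single_valued_iff_The[OF sv(2)])
  have "continuous_map X Y h" by (rule continuous_map_closed_graph[OF Y S h_graph])
  moreover have "continuous_map Y X g"
    by (rule continuous_map_closed_graph[OF X closedin_converse[OF S] g_graph])
  moreover have "g (h x) = x" if "x \<in> topspace X" for x
    using h_graph[where x = x and y = "h x"] g_graph[where x = x and y = "h x"] that by simp
  moreover have "h (g y) = y" if "y \<in> topspace Y" for y
    using h_graph[where x = "g y" and y = y] g_graph[where x = "g y" and y = y] that by simp
  ultimately have "homeomorphic_map X Y h"
    unfolding homeomorphic_map_maps homeomorphic_maps_def by blast
  moreover have "S = {(x, h x) | x. x \<in> topspace X}" using h_graph by auto
  ultimately show thesis by (rule that)
qed

section \<open>The projective Fraisse limit\<close>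

context
  fixes m n :: nat and T :: "'a topology" and s :: "nat \<Rightarrow> ('a \<times> 'a) set" and p :: "nat \<Rightarrow> 'a"
  assumes limit: "proj_fraisse_limit m n T s p"
begin

lemma limit_top_structure: "top_structure m n T s p"
  using limit by (simp add: proj_fraisse_limit_def)

lemma limit_compact_space: "compact_space T"
  using limit_top_structure by (simp add: top_structure_def)

lemma limit_constant_in_topspace: "j \<in> {1..n} \<Longrightarrow> p j \<in> topspace T"
  using limit_top_structure by (simp add: top_structure_def)

lemma limit_epimorphisms_onto_F:
  "\<forall>(A :: nat set) sA. in_F m A sA \<longrightarrow>
     (\<exists>\<phi>. epimorphism m n T s p (ext_univ n A) (ext_rel n sA) ext_const \<phi>)"
  using limit unfolding proj_fraisse_limit_def by (elim conjE)

lemma limit_factorization: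
  "\<forall>(X :: nat set) f. finite X \<and> continuous_map T (discrete_topology X) f \<longrightarrow>
     (\<exists>(A :: nat set) sA \<psi> g. in_F m A sA \<and>
        epimorphism m n T s p (ext_univ n A) (ext_rel n sA) ext_const \<psi> \<and>
        (\<forall>x\<in>topspace T. f x = g (\<psi> x)))"
  using limit unfolding proj_fraisse_limit_def by (elim conjE)

lemma limit_homogeneous:
  "\<forall>(A :: nat set) sA \<phi>1 \<phi>2. in_F m A sA \<and>
     epimorphism m n T s p (ext_univ n A) (ext_rel n sA) ext_const \<phi>1 \<and>
     epimorphism m n T s p (ext_univ n A) (ext_rel n sA) ext_const \<phi>2 \<longrightarrow>
     (\<exists>\<alpha>. automorphism m n T s p \<alpha> \<and> (\<forall>x\<in>topspace T. \<phi>1 x = \<phi>2 (\<alpha> x)))"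
  using limit unfolding proj_fraisse_limit_def by (elim conjE)

lemma limit_rel_closed: "i \<in> {1..m} \<Longrightarrow> closedin (prod_topology T T) (s i)"
  using limit_top_structure by (simp add: top_structure_def)

lemma limit_rel_subset: "i \<in> {1..m} \<Longrightarrow> s i \<subseteq> topspace T \<times> topspace T"
  using closedin_subset[OF limit_rel_closed] by simp

lemma limit_epimorphism_exists:
  fixes B :: "'b set"
  assumes F: "in_F m B sB"
  obtains \<theta> where "epimorphism m n T s p (ext_univ n B) (ext_rel n sB) ext_const \<theta>"
proof -
  have sub: "sB k \<subseteq> B \<times> B" if "k \<in> {1..m}" for k using F that by (simp add: in_F_def)
  txt \<open>(L1) only speaks about structures on subsets of nat, so B is first transported there.\<close>
  obtain f :: "'b \<Rightarrow> nat" where f: "inj_on f B"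
    using finite_imp_inj_to_nat_seg[of B] F by (auto simp: in_F_def)
  have "in_F m (f ` B) (\<lambda>k. pair_image f (sB k))" by (rule in_F_inj_image[OF F f])
  then obtain \<phi> where \<phi>: "epimorphism m n T s p (ext_univ n (f ` B))
      (ext_rel n (\<lambda>k. pair_image f (sB k))) ext_const \<phi>"
    using limit_epimorphisms_onto_F by blast
  have rel: "pair_image (inv_into B f) (pair_image f (sB k)) = sB k" if "k \<in> {1..m}" for k
  proof -
    have "pair_image (inv_into B f) (pair_image f (sB k)) = (\<lambda>e. e) ` sB k"
      unfolding image_image by (rule image_cong) (use sub[OF that] inv_into_f_f[OF f] in auto)
    then show ?thesis by simp
  qed
  have univ: "inv_into B f ` f ` B = B" using f by simp
  show thesis by (rule that[OF epimorphism_compose_map_sum[OF \<phi> univ rel]])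
qed

lemma limit_separates_closed:
  assumes x: "x \<in> topspace T" and K: "closedin T K" "x \<notin> K"
  obtains A :: "nat set" and sA \<psi> where "in_F m A sA"
    "epimorphism m n T s p (ext_univ n A) (ext_rel n sA) ext_const \<psi>" "\<psi> x \<notin> \<psi> ` K"
proof -
  have "zero_dimensional T" using limit_top_structure by (simp add: top_structure_def)
  moreover have "openin T (topspace T - K)" using K(1) by (simp add: openin_diff)
  ultimately obtain V where V: "openin T V" "closedin T V" "x \<in> V" "V \<subseteq> topspace T - K"
    using x K(2) unfolding zero_dimensional_def by blast
  define f :: "'a \<Rightarrow> nat" where "f = (\<lambda>y. if y \<in> V then 1 else 0)"
  have "continuous_map T (discrete_topology {0, 1}) f"
    unfolding f_def by (rule continuous_map_indicator_clopen[OF V(1,2)])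
  then obtain A :: "nat set" and sA \<psi> g where A: "in_F m A sA"
    and \<psi>: "epimorphism m n T s p (ext_univ n A) (ext_rel n sA) ext_const \<psi>"
    and fg: "\<forall>y\<in>topspace T. f y = g (\<psi> y)"
    using limit_factorization[rule_format, of "{0, 1}" f] by blast
  have "\<psi> x \<noteq> \<psi> y" if "y \<in> K" for y
  proof
    assume "\<psi> x = \<psi> y"
    moreover have "y \<in> topspace T" using closedin_subset[OF K(1)] that by blast
    ultimately have "f x = f y" using fg x by simp
    moreover have "y \<notin> V" using V(4) that by blast
    ultimately show False using V(3) by (simp add: f_def)
  qed
  then show thesis using that[OF A \<psi>] by blast
qed

lemma limit_separates_points:
  assumes "x \<in> topspace T" "y \<in> topspace T" "x \<noteq> y"
  obtains A :: "nat set" and sA \<psi> where "in_F m A sA"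
    "epimorphism m n T s p (ext_univ n A) (ext_rel n sA) ext_const \<psi>" "\<psi> x \<noteq> \<psi> y"
proof -
  have "Hausdorff_space T" using limit_top_structure by (simp add: top_structure_def)
  then have "closedin T {y}" using assms(2) by (rule closedin_Hausdorff_singleton)
  then show thesis using limit_separates_closed[OF assms(1)] assms(3) that by blast
qed

lemma limit_refined_factorization:
  assumes A: "in_F m (A :: nat set) sA"
    and \<psi>: "epimorphism m n T s p (ext_univ n A) (ext_rel n sA) ext_const \<psi>"
  obtains B :: "nat refined set" and sB \<theta> \<alpha> where
    "\<And>k. single_valued (apsnd fst ` sB k)" "\<And>k. single_valued (apsnd fst ` (sB k)\<inverse>)"
    "epimorphism m n T s p (ext_univ n B) (ext_rel n sB) ext_const \<theta>"
    "automorphism m n T s p \<alpha>" "\<And>x. x \<in> topspace T \<Longrightarrow> \<psi> x = map_sum fst id (\<theta> (\<alpha> x))"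
proof -
  obtain B :: "nat refined set" and sB where B: "in_F m B sB" "fst ` B = A"
    "\<And>k. k \<in> {1..m} \<Longrightarrow> pair_image fst (sB k) = sA k"
    and sv: "\<And>k. single_valued (apsnd fst ` sB k)" "\<And>k. single_valued (apsnd fst ` (sB k)\<inverse>)"
    using in_F_refinement[OF A] by blast
  obtain \<theta> where \<theta>: "epimorphism m n T s p (ext_univ n B) (ext_rel n sB) ext_const \<theta>"
    using limit_epimorphism_exists[OF B(1)] by blast
  have "epimorphism m n T s p (ext_univ n A) (ext_rel n sA) ext_const (map_sum fst id \<circ> \<theta>)"
    using epimorphism_compose_map_sum[OF \<theta> B(2,3)] .
  then obtain \<alpha> where "automorphism m n T s p \<alpha>" "\<forall>x\<in>topspace T. \<psi> x = (map_sum fst id \<circ> \<theta>) (\<alpha> x)"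
    using limit_homogeneous A \<psi> by blast
  then show thesis using that[OF sv \<theta>] by simp
qed

lemma limit_rel_collapse:
  assumes i: "i \<in> {1..m}" and A: "in_F m (A :: nat set) sA"
    and \<psi>: "epimorphism m n T s p (ext_univ n A) (ext_rel n sA) ext_const \<psi>"
    and xy: "(x, y) \<in> s i" and xz: "(x, z) \<in> s i"
  shows "\<psi> y = \<psi> z"
proof -
  obtain B :: "nat refined set" and sB \<theta> \<alpha> where sv: "single_valued (apsnd fst ` sB i)"
    and \<theta>: "epimorphism m n T s p (ext_univ n B) (ext_rel n sB) ext_const \<theta>"
    and \<alpha>: "automorphism m n T s p \<alpha>"
    and factor: "\<And>x. x \<in> topspace T \<Longrightarrow> \<psi> x = map_sum fst id (\<theta> (\<alpha> x))"
    using limit_refined_factorization[OF A \<psi>] by metis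
  have "(\<theta> (\<alpha> x), \<theta> (\<alpha> y)) \<in> ext_rel n sB i" "(\<theta> (\<alpha> x), \<theta> (\<alpha> z)) \<in> ext_rel n sB i"
    using epimorphism_edge[OF \<theta> i] automorphism_edge[OF \<alpha> i] xy xz by blast+
  then have "map_sum fst id (\<theta> (\<alpha> y)) = map_sum fst id (\<theta> (\<alpha> z))"
    by (rule single_valued_apsnd_imageD[OF single_valued_ext_rel[where sB = sB and k = i, OF sv]])
  moreover have "y \<in> topspace T" "z \<in> topspace T" using limit_rel_subset[OF i] xy xz by auto
  ultimately show ?thesis using factor by simp
qed

lemma limit_rel_converse_collapse:
  assumes i: "i \<in> {1..m}" and A: "in_F m (A :: nat set) sA"
    and \<psi>: "epimorphism m n T s p (ext_univ n A) (ext_rel n sA) ext_const \<psi>"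
    and xz: "(x, z) \<in> s i" and yz: "(y, z) \<in> s i"
  shows "\<psi> x = \<psi> y"
proof -
  obtain B :: "nat refined set" and sB \<theta> \<alpha> where sv: "single_valued (apsnd fst ` (sB i)\<inverse>)"
    and \<theta>: "epimorphism m n T s p (ext_univ n B) (ext_rel n sB) ext_const \<theta>"
    and \<alpha>: "automorphism m n T s p \<alpha>"
    and factor: "\<And>x. x \<in> topspace T \<Longrightarrow> \<psi> x = map_sum fst id (\<theta> (\<alpha> x))"
    using limit_refined_factorization[OF A \<psi>] by metis
  have "(\<theta> (\<alpha> z), \<theta> (\<alpha> x)) \<in> (ext_rel n sB i)\<inverse>" "(\<theta> (\<alpha> z), \<theta> (\<alpha> y)) \<in> (ext_rel n sB i)\<inverse>"
    using epimorphism_edge[OF \<theta> i] automorphism_edge[OF \<alpha> i] xz yz by blast+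
  then have "map_sum fst id (\<theta> (\<alpha> x)) = map_sum fst id (\<theta> (\<alpha> y))"
    unfolding ext_rel_converse
    by (rule single_valued_apsnd_imageD[OF single_valued_ext_rel[where sB = "\<lambda>k. (sB k)\<inverse>" and k = i, OF sv]])
  moreover have "x \<in> topspace T" "y \<in> topspace T" using limit_rel_subset[OF i] xz yz by auto
  ultimately show ?thesis using factor by simp
qed

lemma limit_rel_single_valued:
  assumes i: "i \<in> {1..m}"
  shows "single_valued (s i)"
proof (rule single_valuedI)
  fix x y z assume xy: "(x, y) \<in> s i" and xz: "(x, z) \<in> s i"
  show "y = z"
  proof (rule ccontr)
    assume "y \<noteq> z"
    moreover have "y \<in> topspace T" "z \<in> topspace T" using limit_rel_subset[OF i] xy xz by auto
    ultimately obtain A :: "nat set" and sA \<psi> where "in_F m A sA"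
      "epimorphism m n T s p (ext_univ n A) (ext_rel n sA) ext_const \<psi>" "\<psi> y \<noteq> \<psi> z"
      using limit_separates_points by metis
    then show False using limit_rel_collapse[OF i _ _ xy xz] by blast
  qed
qed

lemma limit_rel_converse_single_valued:
  assumes i: "i \<in> {1..m}"
  shows "single_valued ((s i)\<inverse>)"
proof (rule single_valuedI)
  fix z x y assume "(z, x) \<in> (s i)\<inverse>" "(z, y) \<in> (s i)\<inverse>"
  then have xz: "(x, z) \<in> s i" and yz: "(y, z) \<in> s i" by auto
  show "x = y"
  proof (rule ccontr)
    assume "x \<noteq> y"
    moreover have "x \<in> topspace T" "y \<in> topspace T" using limit_rel_subset[OF i] xz yz by auto
    ultimately obtain A :: "nat set" and sA \<psi> where "in_F m A sA"
      "epimorphism m n T s p (ext_univ n A) (ext_rel n sA) ext_const \<psi>" "\<psi> x \<noteq> \<psi> y"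
      using limit_separates_points by metis
    then show False using limit_rel_converse_collapse[OF i _ _ xz yz] by blast
  qed
qed

lemma limit_closed_eq_topspace:
  assumes closed: "closedin T D"
    and image: "\<And>(A :: nat set) sA \<psi>. in_F m A sA \<Longrightarrow>
      epimorphism m n T s p (ext_univ n A) (ext_rel n sA) ext_const \<psi> \<Longrightarrow> \<psi> ` D = ext_univ n A"
  shows "D = topspace T"
proof (intro equalityI subsetI)
  fix x assume x: "x \<in> topspace T"
  show "x \<in> D"
  proof (rule ccontr)
    assume "x \<notin> D"
    then obtain A :: "nat set" and sA \<psi> where A: "in_F m A sA"
      and \<psi>: "epimorphism m n T s p (ext_univ n A) (ext_rel n sA) ext_const \<psi>" and "\<psi> x \<notin> \<psi> ` D"
      using limit_separates_closed[OF x closed] by metis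
    then show False using image[OF A \<psi>] epimorphism_in[OF \<psi> x] by blast
  qed
qed (use closedin_subset[OF closed] in blast)

lemma limit_rel_Domain:
  assumes i: "i \<in> {1..m}"
  shows "Domain (s i) = topspace T"
proof (rule limit_closed_eq_topspace)
  show "closedin T (Domain (s i))"
    using Abstract_Topological_Spaces.closed_map_fst[OF limit_compact_space] limit_rel_closed[OF i]
    unfolding closed_map_def fst_eq_Domain by blast
qed (rule epimorphism_image_Domain[OF _ _ i])

lemma limit_rel_Range:
  assumes i: "i \<in> {1..m}"
  shows "Range (s i) = topspace T"
proof (rule limit_closed_eq_topspace)
  show "closedin T (Range (s i))"
    using Abstract_Topological_Spaces.closed_map_snd[OF limit_compact_space] limit_rel_closed[OF i]
    unfolding closed_map_def snd_eq_Range by blast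
qed (rule epimorphism_image_Range[OF _ _ i])

lemma limit_rel_fixes_constants:
  assumes i: "i \<in> {1..m}" and j: "j \<in> {1..n}" and e: "(p j, y) \<in> s i"
  shows "y = p j"
proof (rule ccontr)
  assume "y \<noteq> p j"
  moreover have "y \<in> topspace T" using limit_rel_subset[OF i] e by auto
  ultimately obtain A :: "nat set" and sA \<psi> where
    \<psi>: "epimorphism m n T s p (ext_univ n A) (ext_rel n sA) ext_const \<psi>" and "\<psi> y \<noteq> \<psi> (p j)"
    using limit_separates_points limit_constant_in_topspace[OF j] by metis
  moreover have "\<psi> (p j) = Inr j" using \<psi> j by (simp add: epimorphism_def ext_const_def)
  moreover have "(\<psi> (p j), \<psi> y) \<in> ext_rel n sA i" by (rule epimorphism_edge[OF \<psi> i e])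
  ultimately show False using ext_rel_Inr by metis
qed

end

theorem lemma3p8:
  fixes m n :: nat and T :: "'a topology" and s :: "nat \<Rightarrow> ('a \<times> 'a) set" and p :: "nat \<Rightarrow> 'a"
  assumes "proj_fraisse_limit m n T s p"
  shows "\<forall>i\<in>{1..m}. \<exists>h. homeomorphic_map T T h \<and>
            s i = {(x, h x) | x. x \<in> topspace T} \<and>
            (\<forall>j\<in>{1..n}. h (p j) = p j)"
proof
  fix i assume i: "i \<in> {1..m}"
  have T: "compact_space T" by (rule limit_compact_space[OF assms])
  obtain h where h: "homeomorphic_map T T h" and graph: "s i = {(x, h x) | x. x \<in> topspace T}"
    using homeomorphic_map_closed_graph[OF T T limit_rel_closed[OF assms i]
        limit_rel_single_valued[OF assms i] limit_rel_converse_single_valued[OF assms i]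
        limit_rel_Domain[OF assms i] limit_rel_Range[OF assms i]] .
  have "h (p j) = p j" if j: "j \<in> {1..n}" for j
  proof -
    have "(p j, h (p j)) \<in> s i" using graph limit_constant_in_topspace[OF assms j] by blast
    then show ?thesis by (rule limit_rel_fixes_constants[OF assms i j])
  qed
  with h graph show "\<exists>h. homeomorphic_map T T h \<and> s i = {(x, h x) | x. x \<in> topspace T} \<and>
      (\<forall>j\<in>{1..n}. h (p j) = p j)" by blast
qed

end
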